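(* Let $G=HK$ for two normal subgroups $H$ and $K$ of the finite group $G$, and let $m\ge 2$. If $M(G,H,K)$ is trivial and $H$ has exponent $m-1$, then $d^\wedge_m(H,K)=d(H,K)$.
   Context: All groups are finite; ${}^g x=gxg^{-1}$, $[x,y]=xyx^{-1}y^{-1}$. For normal subgroups $H,K$ of $G$, $H\wedge K$ is the group generated by symbols $h\wedge k$ ($h\in H,k\in K$) subject to $hh'\wedge k=({}^h h'\wedge {}^h k)(h\wedge k)$, $h\wedge kk'=(h\wedge k)({}^k h\wedge {}^k k')$, $y\wedge y=1$ for $y\in H\cap K$; $\kappa':H\wedge K\to[H,K]$, $h\wedge k\mapsto[h,k]$, and $M(G,H,K):=\ker\kappa'$. $d^\wedge_m(H,K)=|\{(h,k)\in H\times K:h^m\wedge k=1\}|/(|H||K|)$ and $d(H,K)=|\{(h,k)\in H\times K:hk=kh\}|/(|H||K|)$. *)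

theory Defs
  imports "HOL-Algebra.Algebra" Complex_Main
begin

definition conjg :: "('a, 'b) monoid_scheme \<Rightarrow> 'a \<Rightarrow> 'a \<Rightarrow> 'a" where
  "conjg G g x = g \<otimes>\<^bsub>G\<^esub> x \<otimes>\<^bsub>G\<^esub> inv\<^bsub>G\<^esub> g"

definition commg :: "('a, 'b) monoid_scheme \<Rightarrow> 'a \<Rightarrow> 'a \<Rightarrow> 'a" where
  "commg G x y = x \<otimes>\<^bsub>G\<^esub> y \<otimes>\<^bsub>G\<^esub> inv\<^bsub>G\<^esub> x \<otimes>\<^bsub>G\<^esub> inv\<^bsub>G\<^esub> y"

definition group_exponent :: "('a, 'b) monoid_scheme \<Rightarrow> 'a set \<Rightarrow> nat" where
  "group_exponent G H = (LEAST n. 0 < n \<and> (\<forall>h\<in>H. h [^]\<^bsub>G\<^esub> n = \<one>\<^bsub>G\<^esub>))"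

text \<open>The nonabelian exterior product H \<and> K as a presented group.
  Words in the generators h\<and>k (h in H, k in K) and their inverses:
  a letter (True,(h,k)) stands for h\<and>k, (False,(h,k)) for its inverse;
  a word stands for the product of its letters from left to right.\<close>

type_synonym 'a ext_word = "(bool \<times> ('a \<times> 'a)) list"

definition ext_words :: "'a set \<Rightarrow> 'a set \<Rightarrow> 'a ext_word set" where
  "ext_words H K = {w. \<forall>l\<in>set w. snd l \<in> H \<times> K}"

inductive ext_eq :: "('a, 'b) monoid_scheme \<Rightarrow> 'a set \<Rightarrow> 'a set \<Rightarrow> 'a ext_word \<Rightarrow> 'a ext_word \<Rightarrow> bool"
  for G H K where
  refl: "w \<in> ext_words H K \<Longrightarrow> ext_eq G H K w w"
| sym: "ext_eq G H K u v \<Longrightarrow> ext_eq G H K v u"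
| trans: "ext_eq G H K u v \<Longrightarrow> ext_eq G H K v w \<Longrightarrow> ext_eq G H K u w"
| cong: "ext_eq G H K u u' \<Longrightarrow> ext_eq G H K v v' \<Longrightarrow> ext_eq G H K (u @ v) (u' @ v')"
| cancel: "h \<in> H \<Longrightarrow> k \<in> K \<Longrightarrow> ext_eq G H K [(b, (h, k)), (\<not> b, (h, k))] []"
| rel1: "h \<in> H \<Longrightarrow> h' \<in> H \<Longrightarrow> k \<in> K \<Longrightarrow>
     ext_eq G H K [(True, (h \<otimes>\<^bsub>G\<^esub> h', k))]
                  [(True, (conjg G h h', conjg G h k)), (True, (h, k))]"
| rel2: "h \<in> H \<Longrightarrow> k \<in> K \<Longrightarrow> k' \<in> K \<Longrightarrow>
     ext_eq G H K [(True, (h, k \<otimes>\<^bsub>G\<^esub> k'))]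
                  [(True, (h, k)), (True, (conjg G k h, conjg G k k'))]"
| rel3: "y \<in> H \<inter> K \<Longrightarrow> ext_eq G H K [(True, (y, y))] []"

definition ext_rel :: "('a, 'b) monoid_scheme \<Rightarrow> 'a set \<Rightarrow> 'a set \<Rightarrow> ('a ext_word \<times> 'a ext_word) set" where
  "ext_rel G H K = {(u, v). ext_eq G H K u v}"

definition ext_rep :: "'a ext_word set \<Rightarrow> 'a ext_word" where
  "ext_rep A = (SOME u. u \<in> A)"

definition ext_prod :: "('a, 'b) monoid_scheme \<Rightarrow> 'a set \<Rightarrow> 'a set \<Rightarrow> 'a ext_word set monoid" where
  "ext_prod G H K =
     \<lparr> carrier = ext_words H K // ext_rel G H K,
       monoid.mult = (\<lambda>A B. ext_rel G H K `` {ext_rep A @ ext_rep B}),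
       one = ext_rel G H K `` {[]} \<rparr>"

definition ext_wedge :: "('a, 'b) monoid_scheme \<Rightarrow> 'a set \<Rightarrow> 'a set \<Rightarrow> 'a \<Rightarrow> 'a \<Rightarrow> 'a ext_word set" where
  "ext_wedge G H K h k = ext_rel G H K `` {[(True, (h, k))]}"

definition word_comm :: "('a, 'b) monoid_scheme \<Rightarrow> 'a ext_word \<Rightarrow> 'a" where
  "word_comm G w = foldr (\<lambda>(b, (h, k)) acc.
       (if b then commg G h k else inv\<^bsub>G\<^esub> (commg G h k)) \<otimes>\<^bsub>G\<^esub> acc) w \<one>\<^bsub>G\<^esub>"

definition kappa' :: "('a, 'b) monoid_scheme \<Rightarrow> 'a ext_word set \<Rightarrow> 'a" where
  "kappa' G A = word_comm G (ext_rep A)"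

definition M_ext :: "('a, 'b) monoid_scheme \<Rightarrow> 'a set \<Rightarrow> 'a set \<Rightarrow> 'a ext_word set set" where
  "M_ext G H K = kernel (ext_prod G H K) G (kappa' G)"

definition d_wedge :: "('a, 'b) monoid_scheme \<Rightarrow> nat \<Rightarrow> 'a set \<Rightarrow> 'a set \<Rightarrow> real" where
  "d_wedge G m H K =
     real (card {(h, k) \<in> H \<times> K. ext_wedge G H K (h [^]\<^bsub>G\<^esub> m) k = \<one>\<^bsub>ext_prod G H K\<^esub>})
     / (real (card H) * real (card K))"

definition d_comm :: "('a, 'b) monoid_scheme \<Rightarrow> 'a set \<Rightarrow> 'a set \<Rightarrow> real" where
  "d_comm G H K =
     real (card {(h, k) \<in> H \<times> K. h \<otimes>\<^bsub>G\<^esub> k = k \<otimes>\<^bsub>G\<^esub> h})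
     / (real (card H) * real (card K))"

end

theory Submission
  imports Defs
begin

(* The map kappa' sends the class of a word in the generators h\<and>k to the
   product of the corresponding commutators; it is well defined because every defining
   relation of H\<and>K holds for commutators in G.  Consequently h\<and>k lies in M(G,H,K) exactly
   when [h,k] = 1, and if M(G,H,K) is trivial this gives

       h\<and>k = 1  \<longleftrightarrow>  hk = kh      for all h \<in> H, k \<in> K.

   If moreover H has exponent m-1, then h^m = h for every h \<in> H, so the two sets of pairs
   counted by d^\<and>_m(H,K) and d(H,K) coincide, and so do the two densities. *)

definition word_in_carrier :: "('a, 'b) monoid_scheme \<Rightarrow> 'a ext_word \<Rightarrow> bool" where
  "word_in_carrier G w = (\<forall>l\<in>set w. fst (snd l) \<in> carrier G \<and> snd (snd l) \<in> carrier G)"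

lemma (in group) inv_mult_cancel_left: "x \<in> carrier G \<Longrightarrow> y \<in> carrier G \<Longrightarrow> inv x \<otimes> (x \<otimes> y) = y"
  by (simp add: m_assoc[symmetric])

lemma (in group) mult_inv_cancel_left: "x \<in> carrier G \<Longrightarrow> y \<in> carrier G \<Longrightarrow> x \<otimes> (inv x \<otimes> y) = y"
  by (simp add: m_assoc[symmetric])

lemma (in group) word_comm_closed: "word_in_carrier G w \<Longrightarrow> word_comm G w \<in> carrier G"
  by (induction w) (auto simp: word_comm_def word_in_carrier_def commg_def)

lemma (in group) word_comm_append:
  assumes "word_in_carrier G u" and "word_in_carrier G v"
  shows "word_comm G (u @ v) = word_comm G u \<otimes> word_comm G v"
  using assms(1)
proof (induction u)
  case Nil
  then show ?case using word_comm_closed[OF assms(2)] by (simp add: word_comm_def)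
next
  case (Cons a u)
  obtain b h k where a: "a = (b, (h, k))" by (cases a) auto
  have u: "word_in_carrier G u" and hk: "h \<in> carrier G" "k \<in> carrier G"
    using Cons.prems a by (auto simp: word_in_carrier_def)
  define c where "c = (if b then commg G h k else inv (commg G h k))"
  have c: "c \<in> carrier G" using hk by (simp add: c_def commg_def)
  have "word_comm G ((a # u) @ v) = c \<otimes> word_comm G (u @ v)"
    by (simp add: word_comm_def a c_def)
  also have "\<dots> = (c \<otimes> word_comm G u) \<otimes> word_comm G v"
    using Cons.IH[OF u] c u assms(2) by (simp add: m_assoc word_comm_closed)
  also have "\<dots> = word_comm G (a # u) \<otimes> word_comm G v"
    by (simp add: word_comm_def a c_def)
  finally show ?case .
qed

text \<open>Equivalent words have the same commutator value: the defining relations of H\<and>K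
  hold for commutators.  This is exactly the well-definedness of kappa'.\<close>

lemma (in group) ext_eq_word_comm:
  assumes "H \<subseteq> carrier G" and "K \<subseteq> carrier G" and "ext_eq G H K u v"
  shows "word_in_carrier G u \<and> word_in_carrier G v \<and> word_comm G u = word_comm G v"
  using assms(3)
proof (induction rule: ext_eq.induct)
  case (refl w)
  then show ?case using assms(1,2) by (force simp: ext_words_def word_in_carrier_def)
next
  case (sym u v)
  then show ?case by auto
next
  case (trans u v w)
  then show ?case by auto
next
  case (cong u u' v v')
  then show ?case by (auto simp: word_in_carrier_def word_comm_append)
next
  case (cancel h k b)
  then have "h \<in> carrier G" "k \<in> carrier G" using assms(1,2) by auto
  then show ?case by (cases b) (auto simp: word_in_carrier_def word_comm_def commg_def)
next
  case (rel1 h h' k)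
  then have "h \<in> carrier G" "h' \<in> carrier G" "k \<in> carrier G" using assms(1,2) by auto
  then show ?case
    by (simp add: word_in_carrier_def word_comm_def commg_def conjg_def m_assoc inv_mult_group
        inv_mult_cancel_left mult_inv_cancel_left)
next
  case (rel2 h k k')
  then have "h \<in> carrier G" "k \<in> carrier G" "k' \<in> carrier G" using assms(1,2) by auto
  then show ?case
    by (simp add: word_in_carrier_def word_comm_def commg_def conjg_def m_assoc inv_mult_group
        inv_mult_cancel_left mult_inv_cancel_left)
next
  case (rel3 y)
  then have "y \<in> carrier G" using assms(1,2) by auto
  then show ?case by (simp add: word_in_carrier_def word_comm_def commg_def m_assoc)
qed

lemma (in group) commg_eq_one_iff:
  assumes x: "x \<in> carrier G" and y: "y \<in> carrier G"
  shows "commg G x y = \<one> \<longleftrightarrow> x \<otimes> y = y \<otimes> x"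
proof -
  have "commg G x y \<otimes> (y \<otimes> x) = x \<otimes> y"
    using x y by (simp add: commg_def m_assoc inv_mult_cancel_left)
  moreover have "y \<otimes> x \<otimes> inv x \<otimes> inv y = \<one>"
    using x y by (simp add: m_assoc)
  ultimately show ?thesis
    using x y by (auto simp: commg_def)
qed

lemma wedge_eq_one_iff_commute:
  assumes G: "group G" and HK: "H \<subseteq> carrier G" "K \<subseteq> carrier G"
    and h: "h \<in> H" and k: "k \<in> K"
    and M_trivial: "M_ext G H K = {\<one>\<^bsub>ext_prod G H K\<^esub>}"
  shows "ext_wedge G H K h k = \<one>\<^bsub>ext_prod G H K\<^esub> \<longleftrightarrow> h \<otimes>\<^bsub>G\<^esub> k = k \<otimes>\<^bsub>G\<^esub> h"
proof -
  interpret group G by fact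
  have hk: "h \<in> carrier G" "k \<in> carrier G" using HK h k by auto
  have word: "[(True, (h, k))] \<in> ext_words H K" using h k by (simp add: ext_words_def)
  have self: "[(True, (h, k))] \<in> ext_wedge G H K h k"
    unfolding ext_wedge_def ext_rel_def using ext_eq.refl[OF word] by simp
  have comm_value: "word_comm G [(True, (h, k))] = commg G h k"
    using hk by (simp add: word_comm_def commg_def)
  show ?thesis
  proof
    assume "ext_wedge G H K h k = \<one>\<^bsub>ext_prod G H K\<^esub>"
    then have "ext_eq G H K [] [(True, (h, k))]"
      using self by (simp add: ext_prod_def ext_rel_def)
    then have "word_comm G [] = commg G h k"
      using ext_eq_word_comm[OF HK] comm_value by metis
    then show "h \<otimes>\<^bsub>G\<^esub> k = k \<otimes>\<^bsub>G\<^esub> h"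
      using commg_eq_one_iff[OF hk] by (simp add: word_comm_def)
  next
    assume "h \<otimes>\<^bsub>G\<^esub> k = k \<otimes>\<^bsub>G\<^esub> h"
    then have trivial: "commg G h k = \<one>\<^bsub>G\<^esub>" using commg_eq_one_iff[OF hk] by simp
    have carrier: "ext_wedge G H K h k \<in> carrier (ext_prod G H K)"
      unfolding ext_prod_def ext_wedge_def using word by (simp add: quotientI)
    have "ext_rep (ext_wedge G H K h k) \<in> ext_wedge G H K h k"
      unfolding ext_rep_def using self by (rule someI)
    then have "ext_eq G H K [(True, (h, k))] (ext_rep (ext_wedge G H K h k))"
      by (simp add: ext_wedge_def ext_rel_def)
    then have "kappa' G (ext_wedge G H K h k) = \<one>\<^bsub>G\<^esub>"
      using ext_eq_word_comm[OF HK] comm_value trivial by (simp add: kappa'_def)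
    then have "ext_wedge G H K h k \<in> M_ext G H K"
      using carrier by (simp add: M_ext_def kernel_def)
    then show "ext_wedge G H K h k = \<one>\<^bsub>ext_prod G H K\<^esub>" using M_trivial by simp
  qed
qed

lemma (in group) pow_Suc_group_exponent:
  assumes "finite (carrier G)" and "H \<subseteq> carrier G" and "h \<in> H"
  shows "h [^] Suc (group_exponent G H) = h"
proof -
  have "0 < order G \<and> (\<forall>x\<in>H. x [^] order G = \<one>)"
    using assms(1,2) order_gt_0_iff_finite pow_order_eq_1 by blast
  then have "\<forall>x\<in>H. x [^] group_exponent G H = \<one>"
    unfolding group_exponent_def by (rule LeastI2_ex[OF exI]) simp
  then show ?thesis using assms(2,3) by (auto simp: nat_pow_Suc)
qed

theorem mainTheorem8:
  fixes G :: "('a, 'b) monoid_scheme" and H K :: "'a set" and m :: nat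
  assumes "group G" and "finite (carrier G)"
    and "H \<lhd> G" and "K \<lhd> G"
    and "H <#>\<^bsub>G\<^esub> K = carrier G"
    and "m \<ge> 2"
    and "M_ext G H K = {\<one>\<^bsub>ext_prod G H K\<^esub>}"
    and "group_exponent G H = m - 1"
  shows "d_wedge G m H K = d_comm G H K"
proof -
  interpret group G by fact
  have HK: "H \<subseteq> carrier G" "K \<subseteq> carrier G"
    using assms(3,4) by (auto dest: normal_imp_subgroup subgroup.subset)
  have pow_m: "h [^]\<^bsub>G\<^esub> m = h" if "h \<in> H" for h
    using pow_Suc_group_exponent[OF assms(2) HK(1) that] assms(6,8) by (simp add: Suc_diff_1)
  have pair_iff: "ext_wedge G H K (h [^]\<^bsub>G\<^esub> m) k = \<one>\<^bsub>ext_prod G H K\<^esub>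
      \<longleftrightarrow> h \<otimes>\<^bsub>G\<^esub> k = k \<otimes>\<^bsub>G\<^esub> h" if "h \<in> H" "k \<in> K" for h k
    using wedge_eq_one_iff_commute[OF assms(1) HK that assms(7)] pow_m[OF that(1)] by simp
  have "{(h, k) \<in> H \<times> K. ext_wedge G H K (h [^]\<^bsub>G\<^esub> m) k = \<one>\<^bsub>ext_prod G H K\<^esub>}
      = {(h, k) \<in> H \<times> K. h \<otimes>\<^bsub>G\<^esub> k = k \<otimes>\<^bsub>G\<^esub> h}"
    using pair_iff by blast
  then show ?thesis unfolding d_wedge_def d_comm_def by simp
qed

end
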